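(* Let $d\ge 1$, $n,k\ge 1$, and let $M$ be a lonesum $0$-$1$ matrix with $n$ rows and $k$ columns. Then $M$ belongs to $\mathcal{L}_{\leq d}(n,k)$ if and only if the following three properties hold: (i) $M$ has no all-zero column and no all-zero row; (ii) if $(c_1,\ldots,c_m)$ is the column sequence of $M$, then $w(c_{i+1})-w(c_i)\leq d$ for all $i=1,\ldots,m-1$; (iii) if $(r_1,\ldots,r_m)$ is the row sequence of $M$, then $w(r_{i+1})-w(r_i)\leq d$ for all $i=1,\ldots,m-1$.
   Context: A $0$-$1$ matrix is lonesum if it is uniquely determined by its row sum vector and column sum vector; equivalently, it contains no $2\times 2$ submatrix equal to $\begin{pmatrix}1&0\\0&1\end{pmatrix}$ or $\begin{pmatrix}0&1\\1&0\end{pmatrix}$. Two rows (resp. columns) are of the same type iff they are identical vectors. The weight $w(v)$ of a row or column $v$ is its number of $1$ entries. In a lonesum matrix, distinct columns have distinct weights (and the set of $1$-positions of a lighter column is contained in that of a heavier one); the column sequence is the list $(c_1,\ldots,c_m)$ of the distinct column vectors of $M$ ordered by increasing weight, and the row sequence $(r_1,\ldots,r_m)$ is defined analogously for rows. $\mathcal{L}_{\leq d}(n,k)$ is the set of lonesum $0$-$1$ matrices with $n$ rows and $k$ columns having no all-zero row and no all-zero column, in which at most $d$ columns are of the same type and at most $d$ rows are of the same type.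
   Formalization: Conditions (ii) and (iii) also require $w(c_1)\leq d$ and $w(r_1)\leq d$, so the weight gaps are bounded for i = 0,...,m-1 with $w(c_0)=w(r_0)=0$. The statement above fails without it. *)

theory Defs
  imports Main
begin

text \<open>An n x k 0-1 matrix is modelled as M :: nat => nat => bool, where only the
entries M i j with i < n and j < k are relevant (True = 1, False = 0).\<close>

definition row_vec :: "nat \<Rightarrow> (nat \<Rightarrow> nat \<Rightarrow> bool) \<Rightarrow> nat \<Rightarrow> bool list" where
  "row_vec k M i = map (M i) [0..<k]"

definition col_vec :: "nat \<Rightarrow> (nat \<Rightarrow> nat \<Rightarrow> bool) \<Rightarrow> nat \<Rightarrow> bool list" where
  "col_vec n M j = map (\<lambda>i. M i j) [0..<n]"

definition weight :: "bool list \<Rightarrow> nat" where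
  "weight v = length (filter id v)"

definition lonesum :: "nat \<Rightarrow> nat \<Rightarrow> (nat \<Rightarrow> nat \<Rightarrow> bool) \<Rightarrow> bool" where
  "lonesum n k M \<longleftrightarrow>
     (\<forall>M'. (\<forall>i<n. weight (row_vec k M' i) = weight (row_vec k M i)) \<and>
           (\<forall>j<k. weight (col_vec n M' j) = weight (col_vec n M j))
        \<longrightarrow> (\<forall>i<n. \<forall>j<k. M' i j = M i j))"

definition L_le :: "nat \<Rightarrow> nat \<Rightarrow> nat \<Rightarrow> (nat \<Rightarrow> nat \<Rightarrow> bool) \<Rightarrow> bool" where
  "L_le d n k M \<longleftrightarrow>
     lonesum n k M \<and>
     (\<forall>i<n. True \<in> set (row_vec k M i)) \<and>
     (\<forall>j<k. True \<in> set (col_vec n M j)) \<and>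
     (\<forall>j<k. card {j'. j' < k \<and> col_vec n M j' = col_vec n M j} \<le> d) \<and>
     (\<forall>i<n. card {i'. i' < n \<and> row_vec k M i' = row_vec k M i} \<le> d)"

definition col_seq :: "nat \<Rightarrow> nat \<Rightarrow> (nat \<Rightarrow> nat \<Rightarrow> bool) \<Rightarrow> bool list list" where
  "col_seq n k M = sort_key weight (remdups (map (col_vec n M) [0..<k]))"

definition row_seq :: "nat \<Rightarrow> nat \<Rightarrow> (nat \<Rightarrow> nat \<Rightarrow> bool) \<Rightarrow> bool list list" where
  "row_seq n k M = sort_key weight (remdups (map (row_vec k M) [0..<n]))"

text \<open>Consecutive weight gaps at most d, with the convention w(v_0) = 0.\<close>
definition gaps_le :: "nat \<Rightarrow> bool list list \<Rightarrow> bool" where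
  "gaps_le d vs \<longleftrightarrow>
     (vs \<noteq> [] \<longrightarrow> weight (vs ! 0) \<le> d) \<and>
     (\<forall>i. Suc i < length vs \<longrightarrow> weight (vs ! Suc i) - weight (vs ! i) \<le> d)"

end

theory Submission
  imports Defs
begin

text \<open>A lonesum matrix contains no 2x2 switch, since flipping one would preserve all
row and column sums. Hence the supports of its columns are totally ordered by inclusion,
and listing the distinct columns by increasing weight, after an empty one, gives a chain
S_0 = {} <= S_1 <= ... <= S_m. Two rows are equal iff they lie in the same sets S_q, so
every row class of a matrix without zero rows is one of the differences S_(p+1) - S_p, and
every nonempty such difference is a row class. Their sizes are the weight gaps of the column
sequence, so those gaps are at most d iff no row type occurs more than d times. The
statement about the row sequence is the same fact for the transposed matrix.\<close>

definition ones :: "bool list \<Rightarrow> nat set" where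
  "ones v = {i. i < length v \<and> v ! i}"

lemma weight_eq_card_ones: "weight v = card (ones v)"
  by (simp add: weight_def ones_def length_filter_conv_card)

lemma finite_ones [simp]: "finite (ones v)"
  by (simp add: ones_def)

lemma ones_Nil [simp]: "ones [] = {}"
  by (simp add: ones_def)

lemma ones_row_vec: "ones (row_vec k M i) = {j. j < k \<and> M i j}"
  by (auto simp: ones_def row_vec_def)

lemma ones_col_vec: "ones (col_vec n M j) = {i. i < n \<and> M i j}"
  by (auto simp: ones_def col_vec_def)

lemma row_vec_transpose: "row_vec n (\<lambda>i j. M j i) = col_vec n M"
  by (simp add: fun_eq_iff row_vec_def col_vec_def)

lemma col_vec_transpose: "col_vec k (\<lambda>i j. M j i) = row_vec k M"
  by (simp add: fun_eq_iff row_vec_def col_vec_def)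

lemma row_vec_eq_iff: "row_vec k M i' = row_vec k M i \<longleftrightarrow> (\<forall>j<k. M i' j = M i j)"
  by (auto simp: row_vec_def map_eq_conv)

lemma True_in_row_vec_iff: "True \<in> set (row_vec k M i) \<longleftrightarrow> (\<exists>j<k. M i j)"
  by (auto simp: row_vec_def)

lemma lonesumD:
  assumes "lonesum n k M"
    and "\<And>i. i < n \<Longrightarrow> weight (row_vec k M' i) = weight (row_vec k M i)"
    and "\<And>j. j < k \<Longrightarrow> weight (col_vec n M' j) = weight (col_vec n M j)"
    and "i < n" "j < k"
  shows "M' i j = M i j"
  using assms(1)[unfolded lonesum_def, rule_format, of M'] assms(2-5) by blast

lemma lonesum_transpose:
  assumes "lonesum n k M"
  shows "lonesum k n (\<lambda>i j. M j i)"
  unfolding lonesum_def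
proof (intro allI impI)
  fix M' i j
  assume weights: "(\<forall>i<k. weight (row_vec n M' i) = weight (row_vec n (\<lambda>i j. M j i) i)) \<and>
    (\<forall>j<n. weight (col_vec k M' j) = weight (col_vec k (\<lambda>i j. M j i) j))"
    and "i < k" "j < n"
  define N where "N = (\<lambda>a b. M' b a)"
  have rows: "row_vec k N = col_vec k M'" and cols: "col_vec n N = row_vec n M'"
    unfolding N_def by (rule row_vec_transpose, rule col_vec_transpose)
  have "N j i = M j i"
  proof (rule lonesumD[OF assms])
    show "weight (row_vec k N a) = weight (row_vec k M a)" if "a < n" for a
      using weights that unfolding rows col_vec_transpose by blast
    show "weight (col_vec n N b) = weight (col_vec n M b)" if "b < k" for b
      using weights that unfolding cols row_vec_transpose by blast
  qed (use \<open>i < k\<close> \<open>j < n\<close> in auto)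
  then show "M' i j = M j i"
    by (simp add: N_def)
qed

lemma card_flip_two:
  fixes f :: "nat \<Rightarrow> bool"
  assumes "x < k" "y < k" "f x \<noteq> f y"
  shows "card {b. b < k \<and> f b \<noteq> (b = x \<or> b = y)} = card {b. b < k \<and> f b}"
    (is "card ?F = card ?S")
proof -
  have swap: "card (insert b (?S - {a})) = card ?S" if "a \<in> ?S" "b \<notin> ?S" for a b
  proof -
    have fin: "finite ?S" by simp
    then have "card (insert b (?S - {a})) = Suc (card (?S - {a}))"
      using that(2) by (intro card_insert_disjoint) auto
    also have "\<dots> = card ?S" using fin that(1) by (rule card_Suc_Diff1)
    finally show ?thesis .
  qed
  show ?thesis
  proof (cases "f x")
    case True
    then have "?F = insert y (?S - {x})" using assms by auto
    moreover have "card (insert y (?S - {x})) = card ?S" by (rule swap) (use True assms in auto)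
    ultimately show ?thesis by simp
  next
    case False
    then have "?F = insert x (?S - {y})" using assms by auto
    moreover have "card (insert x (?S - {y})) = card ?S" by (rule swap) (use False assms in auto)
    ultimately show ?thesis by simp
  qed
qed

definition switch :: "nat \<Rightarrow> nat \<Rightarrow> nat \<Rightarrow> nat \<Rightarrow> (nat \<Rightarrow> nat \<Rightarrow> bool) \<Rightarrow> nat \<Rightarrow> nat \<Rightarrow> bool" where
  "switch i i' j j' M a b \<longleftrightarrow> M a b \<noteq> ((a = i \<or> a = i') \<and> (b = j \<or> b = j'))"

lemma col_vec_switch: "col_vec n (switch i i' j j' M) = row_vec n (switch j j' i i' (\<lambda>a b. M b a))"
  by (auto simp: fun_eq_iff col_vec_def row_vec_def switch_def)

lemma weight_row_vec_switch:
  assumes "j < k" "j' < k" "M i j \<noteq> M i j'" "M i' j \<noteq> M i' j'"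
  shows "weight (row_vec k (switch i i' j j' M) a) = weight (row_vec k M a)"
proof (cases "a = i \<or> a = i'")
  case True
  then have "M a j \<noteq> M a j'" using assms by auto
  then show ?thesis
    using True card_flip_two[OF assms(1,2), of "M a"]
    by (simp add: weight_eq_card_ones ones_row_vec switch_def)
qed (simp add: weight_eq_card_ones ones_row_vec switch_def)

lemma weight_col_vec_switch:
  assumes "i < n" "i' < n" "M i j \<noteq> M i' j" "M i j' \<noteq> M i' j'"
  shows "weight (col_vec n (switch i i' j j' M) b) = weight (col_vec n M b)"
proof -
  have "weight (row_vec n (switch j j' i i' (\<lambda>a b. M b a)) b) = weight (row_vec n (\<lambda>a b. M b a) b)"
    by (rule weight_row_vec_switch) (use assms in auto)
  then show ?thesis
    by (simp only: col_vec_switch row_vec_transpose)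
qed

lemma lonesum_no_switch:
  assumes "lonesum n k M" "i < n" "i' < n" "j < k" "j' < k" "M i j" "M i' j'"
  shows "M i j' \<or> M i' j"
proof (rule ccontr)
  assume "\<not> (M i j' \<or> M i' j)"
  then have "switch i i' j j' M i j = M i j"
    using assms weight_row_vec_switch[of j k j' M i i'] weight_col_vec_switch[of i n i' M j j']
    by (intro lonesumD[OF assms(1)]) auto
  then show False by (simp add: switch_def)
qed

definition nested_cols :: "nat \<Rightarrow> nat \<Rightarrow> (nat \<Rightarrow> nat \<Rightarrow> bool) \<Rightarrow> bool" where
  "nested_cols n k M \<longleftrightarrow> (\<forall>j<k. \<forall>j'<k.
     ones (col_vec n M j) \<subseteq> ones (col_vec n M j') \<or> ones (col_vec n M j') \<subseteq> ones (col_vec n M j))"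

lemma lonesum_nested_cols:
  assumes "lonesum n k M"
  shows "nested_cols n k M"
  unfolding nested_cols_def
proof (intro allI impI)
  fix j j' assume "j < k" "j' < k"
  show "ones (col_vec n M j) \<subseteq> ones (col_vec n M j') \<or> ones (col_vec n M j') \<subseteq> ones (col_vec n M j)"
  proof (rule ccontr)
    assume "\<not> ?thesis"
    then obtain a b where "a < n" "M a j" "\<not> M a j'" "b < n" "M b j'" "\<not> M b j"
      by (auto simp: ones_col_vec)
    then show False
      using lonesum_no_switch[OF assms \<open>a < n\<close> \<open>b < n\<close> \<open>j < k\<close> \<open>j' < k\<close>] by blast
  qed
qed

lemma gaps_le_iff_padded:
  "gaps_le d vs \<longleftrightarrow> (\<forall>p<length vs. weight (vs ! p) - weight (([] # vs) ! p) \<le> d)"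
  by (auto simp: gaps_le_def weight_def nth_Cons split: nat.split)

lemma chain_step_exists:
  assumes "x \<notin> A 0" "x \<in> A q"
  shows "\<exists>p<q. x \<in> A (Suc p) - A p"
  using assms(2)
proof (induction q)
  case 0
  with assms(1) show ?case by simp
next
  case (Suc q)
  show ?case
  proof (cases "x \<in> A q")
    case True
    with Suc.IH show ?thesis using less_SucI by blast
  next
    case False
    with Suc.prems show ?thesis by blast
  qed
qed

lemma chain_class_eq_step:
  assumes mono: "\<And>p q. p \<le> q \<Longrightarrow> q < m \<Longrightarrow> A p \<subseteq> A q"
    and "Suc p < m" "x \<in> A (Suc p) - A p"
  shows "{y. \<forall>q<m. y \<in> A q \<longleftrightarrow> x \<in> A q} = A (Suc p) - A p"
proof -
  have step: "y \<in> A q \<longleftrightarrow> Suc p \<le> q" if "y \<in> A (Suc p) - A p" "q < m" for y q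
    using that mono[of q p] mono[of "Suc p" q] assms(2) by (cases "Suc p \<le> q") auto
  show ?thesis
  proof (intro equalityI subsetI)
    fix y assume "y \<in> {y. \<forall>q<m. y \<in> A q \<longleftrightarrow> x \<in> A q}"
    then have "y \<in> A (Suc p) \<longleftrightarrow> x \<in> A (Suc p)" "y \<in> A p \<longleftrightarrow> x \<in> A p"
      using assms(2) Suc_lessD by blast+
    then show "y \<in> A (Suc p) - A p" using assms(3) by blast
  next
    fix y assume "y \<in> A (Suc p) - A p"
    then have "\<forall>q<m. y \<in> A q \<longleftrightarrow> Suc p \<le> q" "\<forall>q<m. x \<in> A q \<longleftrightarrow> Suc p \<le> q"
      using step assms(3) by blast+
    then show "y \<in> {y. \<forall>q<m. y \<in> A q \<longleftrightarrow> x \<in> A q}" by simp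
  qed
qed

lemma sorted_card_nested_nth_mono:
  assumes sorted: "sorted (map (\<lambda>x. card (S x)) xs)"
    and fin: "\<And>x. x \<in> set xs \<Longrightarrow> finite (S x)"
    and nested: "\<And>x y. x \<in> set xs \<Longrightarrow> y \<in> set xs \<Longrightarrow> S x \<subseteq> S y \<or> S y \<subseteq> S x"
    and "p \<le> q" "q < length xs"
  shows "S (xs ! p) \<subseteq> S (xs ! q)"
proof -
  have "card (S (xs ! p)) \<le> card (S (xs ! q))"
    using sorted_nth_mono[OF sorted, of p q] assms(4,5) by simp
  then show ?thesis
    using nested[of "xs ! p" "xs ! q"] card_seteq[OF fin[of "xs ! p"]] assms(4,5) by auto
qed

lemma set_col_seq: "set (col_seq n k M) = col_vec n M ` {..<k}"
  by (simp add: col_seq_def atLeast0LessThan)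

text \<open>The prepended empty column realises the convention w(v_0) = 0 of gaps_le.\<close>

definition col_chain :: "nat \<Rightarrow> nat \<Rightarrow> (nat \<Rightarrow> nat \<Rightarrow> bool) \<Rightarrow> nat \<Rightarrow> nat set" where
  "col_chain n k M q = ones (([] # col_seq n k M) ! q)"

lemma col_chain_0 [simp]: "col_chain n k M 0 = {}"
  by (simp add: col_chain_def)

lemma col_chain_Suc [simp]: "col_chain n k M (Suc q) = ones (col_seq n k M ! q)"
  by (simp add: col_chain_def)

lemma col_chain_subset:
  assumes "q \<le> length (col_seq n k M)"
  shows "col_chain n k M q \<subseteq> {..<n}"
proof (cases q)
  case (Suc p)
  then have "col_seq n k M ! p \<in> col_vec n M ` {..<k}"
    using assms nth_mem[of p "col_seq n k M"] by (simp add: set_col_seq)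
  then show ?thesis using Suc by (auto simp: ones_col_vec)
qed simp

lemma col_chain_mono:
  assumes "nested_cols n k M" "p \<le> q" "q \<le> length (col_seq n k M)"
  shows "col_chain n k M p \<subseteq> col_chain n k M q"
  unfolding col_chain_def
proof (rule sorted_card_nested_nth_mono)
  have "weight = (\<lambda>v. card (ones v))"
    by (simp add: fun_eq_iff weight_eq_card_ones)
  moreover have "sorted (map weight ([] # col_seq n k M))"
    by (simp add: col_seq_def weight_def)
  ultimately show "sorted (map (\<lambda>v. card (ones v)) ([] # col_seq n k M))"
    by simp
  show "ones u \<subseteq> ones v \<or> ones v \<subseteq> ones u"
    if "u \<in> set ([] # col_seq n k M)" "v \<in> set ([] # col_seq n k M)" for u v
    using that assms(1) by (auto simp: set_col_seq nested_cols_def)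
qed (use assms(2,3) in simp_all)

lemma gaps_le_col_seq_iff_col_chain:
  assumes "nested_cols n k M"
  shows "gaps_le d (col_seq n k M) \<longleftrightarrow>
    (\<forall>p<length (col_seq n k M). card (col_chain n k M (Suc p) - col_chain n k M p) \<le> d)"
proof -
  have "card (col_chain n k M (Suc p) - col_chain n k M p) =
      weight (col_seq n k M ! p) - weight (([] # col_seq n k M) ! p)"
    if "p < length (col_seq n k M)" for p
    using that col_chain_mono[OF assms, of p "Suc p"]
    by (simp add: card_Diff_subset weight_eq_card_ones col_chain_def)
  then show ?thesis
    by (simp add: gaps_le_iff_padded)
qed

lemma row_vec_eq_iff_col_chain:
  assumes "i < n" "i' < n"
  shows "row_vec k M i' = row_vec k M i \<longleftrightarrow>
    (\<forall>q<Suc (length (col_seq n k M)). i' \<in> col_chain n k M q \<longleftrightarrow> i \<in> col_chain n k M q)"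
proof -
  have "(\<forall>q<Suc (length (col_seq n k M)). i' \<in> col_chain n k M q \<longleftrightarrow> i \<in> col_chain n k M q) \<longleftrightarrow>
      (\<forall>v\<in>set ([] # col_seq n k M). i' \<in> ones v \<longleftrightarrow> i \<in> ones v)"
    unfolding col_chain_def all_set_conv_all_nth by simp
  also have "\<dots> \<longleftrightarrow> (\<forall>j<k. M i' j = M i j)"
    using assms by (auto simp: set_col_seq ones_col_vec)
  finally show ?thesis by (simp add: row_vec_eq_iff)
qed

lemma row_class_eq_col_chain_step:
  assumes nested: "nested_cols n k M" and "p < length (col_seq n k M)"
    and i: "i \<in> col_chain n k M (Suc p) - col_chain n k M p"
  shows "{i'. i' < n \<and> row_vec k M i' = row_vec k M i} = col_chain n k M (Suc p) - col_chain n k M p"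
proof -
  let ?m = "Suc (length (col_seq n k M))"
  have bounded: "col_chain n k M (Suc p) \<subseteq> {..<n}"
    using assms(2) by (intro col_chain_subset) simp
  then have "i < n" using i by auto
  have "{i'. i' < n \<and> row_vec k M i' = row_vec k M i} =
      {i'. \<forall>q<?m. i' \<in> col_chain n k M q \<longleftrightarrow> i \<in> col_chain n k M q} \<inter> {..<n}"
    using row_vec_eq_iff_col_chain[OF \<open>i < n\<close>] by auto
  also have "\<dots> = (col_chain n k M (Suc p) - col_chain n k M p) \<inter> {..<n}"
    using chain_class_eq_step[of ?m "col_chain n k M" p i] col_chain_mono[OF nested] assms(2) i
    by (simp add: less_Suc_eq_le)
  also have "\<dots> = col_chain n k M (Suc p) - col_chain n k M p"
    using bounded by blast
  finally show ?thesis .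
qed

lemma row_in_col_chain_step:
  assumes "i < n" "j < k" "M i j"
  shows "\<exists>p<length (col_seq n k M). i \<in> col_chain n k M (Suc p) - col_chain n k M p"
proof -
  obtain q where q: "q < length (col_seq n k M)" "col_seq n k M ! q = col_vec n M j"
    using assms(2) by (metis imageI lessThan_iff set_col_seq in_set_conv_nth)
  then have "i \<in> col_chain n k M (Suc q)"
    using assms by (simp add: ones_col_vec)
  then obtain p where "p < Suc q" "i \<in> col_chain n k M (Suc p) - col_chain n k M p"
    using chain_step_exists[of i "col_chain n k M" "Suc q"] by auto
  then show ?thesis
    using q(1) by (intro exI[of _ p]) simp
qed

lemma gaps_le_col_seq_iff_row_multiplicity:
  assumes nested: "nested_cols n k M" and rows: "\<forall>i<n. True \<in> set (row_vec k M i)"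
  shows "gaps_le d (col_seq n k M) \<longleftrightarrow>
    (\<forall>i<n. card {i'. i' < n \<and> row_vec k M i' = row_vec k M i} \<le> d)"
  unfolding gaps_le_col_seq_iff_col_chain[OF nested]
proof (intro iffI allI impI)
  fix i assume blocks: "\<forall>p<length (col_seq n k M). card (col_chain n k M (Suc p) - col_chain n k M p) \<le> d"
    and "i < n"
  then obtain j where "j < k" "M i j"
    using rows by (auto simp: True_in_row_vec_iff)
  then obtain p where p: "p < length (col_seq n k M)"
    and i: "i \<in> col_chain n k M (Suc p) - col_chain n k M p"
    using row_in_col_chain_step \<open>i < n\<close> by blast
  show "card {i'. i' < n \<and> row_vec k M i' = row_vec k M i} \<le> d"
    unfolding row_class_eq_col_chain_step[OF nested p i] using blocks p by blast
next
  fix p assume multiplicity: "\<forall>i<n. card {i'. i' < n \<and> row_vec k M i' = row_vec k M i} \<le> d"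
    and p: "p < length (col_seq n k M)"
  show "card (col_chain n k M (Suc p) - col_chain n k M p) \<le> d"
  proof (cases "col_chain n k M (Suc p) - col_chain n k M p = {}")
    case True
    show ?thesis unfolding True by simp
  next
    case False
    then obtain i where i: "i \<in> col_chain n k M (Suc p) - col_chain n k M p" by blast
    have "col_chain n k M (Suc p) \<subseteq> {..<n}"
      using p by (intro col_chain_subset) simp
    then have "card {i'. i' < n \<and> row_vec k M i' = row_vec k M i} \<le> d"
      using multiplicity i by blast
    then show ?thesis
      unfolding row_class_eq_col_chain_step[OF nested p i] .
  qed
qed

theorem theorem4:
  fixes d n k :: nat and M :: "nat \<Rightarrow> nat \<Rightarrow> bool"
  assumes "d \<ge> 1" and "n \<ge> 1" and "k \<ge> 1"
    and "lonesum n k M"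
  shows "L_le d n k M \<longleftrightarrow>
           ((\<forall>j<k. True \<in> set (col_vec n M j)) \<and> (\<forall>i<n. True \<in> set (row_vec k M i)) \<and>
            gaps_le d (col_seq n k M) \<and> gaps_le d (row_seq n k M))"
proof -
  have cols: "gaps_le d (col_seq n k M) \<longleftrightarrow>
      (\<forall>i<n. card {i'. i' < n \<and> row_vec k M i' = row_vec k M i} \<le> d)"
    if "\<forall>i<n. True \<in> set (row_vec k M i)"
    using gaps_le_col_seq_iff_row_multiplicity[OF lonesum_nested_cols[OF assms(4)] that] .
  have "gaps_le d (col_seq k n (\<lambda>i j. M j i)) \<longleftrightarrow>
      (\<forall>j<k. card {j'. j' < k \<and> row_vec n (\<lambda>i j. M j i) j' = row_vec n (\<lambda>i j. M j i) j} \<le> d)"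
    if "\<forall>j<k. True \<in> set (row_vec n (\<lambda>i j. M j i) j)"
    using gaps_le_col_seq_iff_row_multiplicity[OF
        lonesum_nested_cols[OF lonesum_transpose[OF assms(4)]] that] .
  moreover have "row_seq n k M = col_seq k n (\<lambda>i j. M j i)"
    by (simp only: row_seq_def col_seq_def col_vec_transpose)
  ultimately have rows: "gaps_le d (row_seq n k M) \<longleftrightarrow>
      (\<forall>j<k. card {j'. j' < k \<and> col_vec n M j' = col_vec n M j} \<le> d)"
    if "\<forall>j<k. True \<in> set (col_vec n M j)"
    using that by (simp only: row_vec_transpose)
  show ?thesis
    using cols rows assms(4) unfolding L_le_def by blast
qed

end
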